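(* Let $q=2^s$, $s\ge 1$, and let $C_2\subseteq C_1\subseteq\mathbb F_q^n$ be $\mathbb F_q$-linear codes. If $T^{\otimes n}$ maps $\mathrm{CSS}(C_1,C_2)$ into itself, then $(T^{(\lambda)})^{\otimes n}$ maps $\mathrm{CSS}(C_1,C_2)$ into itself for every $\lambda\in\mathbb F_q$.
   Context: Let $q=2^s$ and $\mathrm{tr}:\mathbb F_q\to\mathbb F_2$, $\mathrm{tr}(x)=\sum_{i=0}^{s-1}x^{2^i}$, the absolute trace. Let $\mathcal H=\mathbb C^q$ with orthonormal basis $\{|x\rangle:x\in\mathbb F_q\}$ and $\mathcal H^{\otimes n}$ with basis $|x\rangle=|x_1\rangle\otimes\cdots\otimes|x_n\rangle$, $x\in\mathbb F_q^n$. For $\lambda\in\mathbb F_q$, $T^{(\lambda)}=\sum_{x\in\mathbb F_q}e^{i\pi\,\mathrm{tr}(\lambda x)/4}|x\rangle\langle x|$, where $\mathrm{tr}(\lambda x)\in\{0,1\}$ is regarded as an integer; $T=T^{(1)}$. For $\mathbb F_q$-linear codes $C_2\subseteq C_1\subseteq\mathbb F_q^n$, the CSS code $\mathrm{CSS}(C_1,C_2)\subseteq\mathcal H^{\otimes n}$ is the complex linear span of the states $|w+C_2\rangle=|C_2|^{-1/2}\sum_{c\in C_2}|w+c\rangle$ for $w\in C_1$. *)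

theory Defs
  imports "HOL-Analysis.Analysis"
begin

text \<open>Absolute trace F_q -> F_2 for q = 2^s, valued in F_q (its image is {0,1}).\<close>
definition abs_trace :: "nat \<Rightarrow> 'a::field \<Rightarrow> 'a" where
  "abs_trace s x = (\<Sum>i<s. x ^ (2 ^ i))"

definition trace_int :: "nat \<Rightarrow> 'a::field \<Rightarrow> int" where
  "trace_int s y = (if abs_trace s y = 0 then 0 else 1)"

definition linear_code :: "('a::field ^ 'n) set \<Rightarrow> bool" where
  "linear_code C \<longleftrightarrow> 0 \<in> C \<and> (\<forall>x\<in>C. \<forall>y\<in>C. x + y \<in> C) \<and> (\<forall>c. \<forall>x\<in>C. c *s x \<in> C)"

text \<open>States in H^{\<otimes>n} = C^(F_q^n), written as coefficient functions in the basis |x>.\<close>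
type_synonym ('a, 'n) state = "'a ^ 'n \<Rightarrow> complex"

definition cspan :: "('a, 'n) state set \<Rightarrow> ('a, 'n) state set" where
  "cspan S = {\<psi>. \<exists>A g. finite A \<and> A \<subseteq> S \<and> \<psi> = (\<lambda>x. \<Sum>v\<in>A. g v * v x)}"

definition coset_state :: "('a::field ^ 'n) set \<Rightarrow> 'a ^ 'n \<Rightarrow> ('a, 'n) state" where
  "coset_state C2 w = (\<lambda>x. \<Sum>c\<in>C2. (if x = w + c then complex_of_real (1 / sqrt (real (card C2))) else 0))"

definition CSS :: "('a::field ^ 'n) set \<Rightarrow> ('a ^ 'n) set \<Rightarrow> ('a, 'n) state set" where
  "CSS C1 C2 = cspan (coset_state C2 ` C1)"

definition T_lambda_tensor :: "nat \<Rightarrow> 'a::field \<Rightarrow> ('a, 'n::finite) state \<Rightarrow> ('a, 'n) state" where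
  "T_lambda_tensor s lam \<psi> = (\<lambda>x. (\<Prod>i\<in>UNIV. exp (\<i> * complex_of_real pi * of_int (trace_int s (lam * x $ i)) / 4)) * \<psi> x)"

end

theory Submission
  imports Defs
begin

text \<open>For \<mu> \<noteq> 0 the dilation x \<mapsto> \<mu> x of F_q^n maps every linear code onto itself, so
  precomposing a state with it permutes the coset states of CSS(C1, C2) and therefore
  preserves the code space. Moreover T^(\<lambda>\<mu>) acts on a dilated state as T^(\<lambda>) acts on the
  undilated one, hence T^(\<lambda>) is the conjugate of T by the dilation by \<lambda>.\<close>

definition state_dilate :: "'a::field \<Rightarrow> ('a, 'n::finite) state \<Rightarrow> ('a, 'n) state" where
  "state_dilate \<mu> \<psi> = (\<lambda>x. \<psi> (\<mu> *s x))"

lemma state_dilate_inverse: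
  fixes \<psi> :: "('a::field, 'n::finite) state"
  assumes "\<mu> \<noteq> 0"
  shows "state_dilate \<mu> (state_dilate (inverse \<mu>) \<psi>) = \<psi>"
  using assms by (simp add: state_dilate_def vector_smult_assoc)

lemma cspan_closed_precomp:
  fixes \<sigma> :: "'a ^ 'n::finite \<Rightarrow> 'a ^ 'n"
  assumes closed: "\<And>v. v \<in> S \<Longrightarrow> (\<lambda>x. v (\<sigma> x)) \<in> S"
    and "\<psi> \<in> cspan S"
  shows "(\<lambda>x. \<psi> (\<sigma> x)) \<in> cspan S"
proof -
  obtain A g where A: "finite A" "A \<subseteq> S" and \<psi>: "\<psi> = (\<lambda>x. \<Sum>v\<in>A. g v * v x)"
    using \<open>\<psi> \<in> cspan S\<close> unfolding cspan_def by blast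
  define h where "h v = (\<lambda>x. v (\<sigma> x))" for v :: "('a, 'n) state"
  define g' where "g' u = (\<Sum>v\<in>{v \<in> A. h v = u}. g v)" for u
  have "(\<lambda>x. \<psi> (\<sigma> x)) = (\<lambda>x. \<Sum>u\<in>h ` A. g' u * u x)"
  proof
    fix x
    have "(\<Sum>u\<in>h ` A. g' u * u x) = (\<Sum>u\<in>h ` A. \<Sum>v\<in>{v \<in> A. h v = u}. g v * h v x)"
      unfolding g'_def sum_distrib_right by (intro sum.cong refl) simp
    also have "\<dots> = (\<Sum>v\<in>A. g v * h v x)"
      by (rule sum.image_gen[OF \<open>finite A\<close>, symmetric])
    finally show "\<psi> (\<sigma> x) = (\<Sum>u\<in>h ` A. g' u * u x)"
      by (simp add: \<psi> h_def)
  qed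
  moreover have "h ` A \<subseteq> S"
    using A(2) closed unfolding h_def by blast
  ultimately show ?thesis
    unfolding cspan_def using A(1) by blast
qed

lemma linear_code_smult_image:
  fixes C :: "('a::field ^ 'n::finite) set"
  assumes "linear_code C" and "\<mu> \<noteq> 0"
  shows "(*s) \<mu> ` C = C"
proof
  show "(*s) \<mu> ` C \<subseteq> C"
    using assms(1) unfolding linear_code_def by auto
  show "C \<subseteq> (*s) \<mu> ` C"
  proof
    fix c assume "c \<in> C"
    then have "inverse \<mu> *s c \<in> C"
      using assms(1) unfolding linear_code_def by auto
    moreover have "c = \<mu> *s (inverse \<mu> *s c)"
      using assms(2) by (simp add: vector_smult_assoc)
    ultimately show "c \<in> (*s) \<mu> ` C" by blast
  qed
qed

lemma coset_state_dilate:
  fixes C2 :: "('a::field ^ 'n::finite) set"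
  assumes "linear_code C2" and "\<mu> \<noteq> 0"
  shows "state_dilate \<mu> (coset_state C2 w) = coset_state C2 (inverse \<mu> *s w)"
proof
  fix x
  let ?k = "complex_of_real (1 / sqrt (real (card C2)))"
  have inj: "inj_on ((*s) \<mu>) C2"
    using assms(2) by (intro inj_onI) (metis vector_mul_lcancel)
  have "\<mu> *s x = w + \<mu> *s c \<longleftrightarrow> x = inverse \<mu> *s w + c" for c
  proof -
    have "\<mu> *s (inverse \<mu> *s w + c) = w + \<mu> *s c"
      using assms(2) by (simp add: vector_add_ldistrib vector_smult_assoc)
    then show ?thesis
      using assms(2) by (metis vector_mul_lcancel)
  qed
  then have "coset_state C2 w (\<mu> *s x) = (\<Sum>c\<in>C2. if x = inverse \<mu> *s w + c then ?k else 0)"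
    unfolding coset_state_def
    by (subst (1) linear_code_smult_image[OF assms, symmetric], subst sum.reindex[OF inj]) simp
  then show "state_dilate \<mu> (coset_state C2 w) x = coset_state C2 (inverse \<mu> *s w) x"
    by (simp add: state_dilate_def coset_state_def)
qed

lemma CSS_dilate_closed:
  fixes C1 C2 :: "('a::field ^ 'n::finite) set"
  assumes "linear_code C1" and "linear_code C2" and "\<mu> \<noteq> 0" and "\<psi> \<in> CSS C1 C2"
  shows "state_dilate \<mu> \<psi> \<in> CSS C1 C2"
proof -
  have "(\<lambda>x. v (\<mu> *s x)) \<in> coset_state C2 ` C1" if v: "v \<in> coset_state C2 ` C1" for v
  proof -
    obtain w where "w \<in> C1" and "v = coset_state C2 w"
      using v by blast
    moreover have "inverse \<mu> *s w \<in> C1"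
      using assms(1) \<open>w \<in> C1\<close> unfolding linear_code_def by blast
    ultimately show ?thesis
      using coset_state_dilate[OF assms(2,3)] unfolding state_dilate_def by force
  qed
  then show ?thesis
    using cspan_closed_precomp assms(4) unfolding CSS_def state_dilate_def by blast
qed

lemma T_lambda_tensor_zero: "T_lambda_tensor s (0::'a::field) \<psi> = \<psi>"
proof -
  have "trace_int s (0::'a) = 0"
    unfolding trace_int_def abs_trace_def by (simp add: power_0_left)
  then show ?thesis
    unfolding T_lambda_tensor_def by simp
qed

lemma T_lambda_tensor_dilate:
  "T_lambda_tensor s (lam * \<mu>) (state_dilate \<mu> \<phi>) = state_dilate \<mu> (T_lambda_tensor s lam \<phi>)"
  unfolding T_lambda_tensor_def state_dilate_def by (simp add: mult.assoc)

theorem mainTheorem7: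
  fixes s :: nat
    and C1 C2 :: "('a::{finite,field} ^ 'n::finite) set"
  assumes "CARD('a) = 2 ^ s" and "s \<ge> 1"
    and "linear_code C1" and "linear_code C2" and "C2 \<subseteq> C1"
    and "\<forall>\<psi>\<in>CSS C1 C2. T_lambda_tensor s (1::'a) \<psi> \<in> CSS C1 C2"
  shows "\<forall>lam::'a. \<forall>\<psi>\<in>CSS C1 C2. T_lambda_tensor s lam \<psi> \<in> CSS C1 C2"
proof (intro allI ballI)
  fix lam :: 'a and \<psi> assume \<psi>: "\<psi> \<in> CSS C1 C2"
  show "T_lambda_tensor s lam \<psi> \<in> CSS C1 C2"
  proof (cases "lam = 0")
    case True
    then show ?thesis using \<psi> by (simp add: T_lambda_tensor_zero)
  next
    case False
    define \<phi> where "\<phi> = state_dilate (inverse lam) \<psi>"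
    have "T_lambda_tensor s lam \<psi> = T_lambda_tensor s (1 * lam) (state_dilate lam \<phi>)"
      by (simp add: \<phi>_def state_dilate_inverse[OF False])
    also have "\<dots> = state_dilate lam (T_lambda_tensor s 1 \<phi>)"
      by (rule T_lambda_tensor_dilate)
    finally have T_conj: "T_lambda_tensor s lam \<psi> = state_dilate lam (T_lambda_tensor s 1 \<phi>)" .
    have "\<phi> \<in> CSS C1 C2"
      unfolding \<phi>_def using CSS_dilate_closed[OF assms(3,4) _ \<psi>] False by simp
    then have "T_lambda_tensor s 1 \<phi> \<in> CSS C1 C2"
      using assms(6) by blast
    then show ?thesis
      unfolding T_conj using CSS_dilate_closed[OF assms(3,4) False] by blast
  qed
qed

end
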